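(* Let $n\in\mathbb N$, $p\in[1,\infty)$, $\Omega=[0,1]^n$, let $X,Y$ be complex Banach spaces, let $\mathcal B$ be a non-empty collection of subsets of $X$ covering $X$, and let $\emptyset\neq\Lambda\subseteq\mathbb R^n$ with $\Lambda+l\Omega\subseteq\Lambda$ for all $l>0$. Let $F:\Lambda\times X\to Y$ satisfy condition (L). Then $F$ is Weyl $p$-bounded on $\mathcal B$ if and only if $F$ is Stepanov $p$-bounded on $\mathcal B$.
   Context: Condition (L): for all $\mathbf t\in\Lambda$, $x\in X$ and $l>0$, the function $\mathbf u\mapsto\|F(\mathbf t+\mathbf u;x)\|_Y$ belongs to $L^p(l\Omega)$. For $B\in\mathcal B$ and $l>0$ let $D^p_{S_{l\Omega},B}(F,0)=\sup_{x\in B}\sup_{\mathbf t\in\Lambda}l^{-n/p}\|F(\mathbf t+\cdot;x)\|_{L^p(l\Omega:Y)}$; the limit $\|F\|^p_{W,B}:=\lim_{l\to\infty}D^p_{S_{l\Omega},B}(F,0)\in[0,\infty]$ exists (the Weyl $p$-norm of $F$ on $B$). $F$ is Weyl $p$-bounded on $\mathcal B$ if $\|F\|^p_{W,B}<\infty$ for each $B\in\mathcal B$. $F$ is Stepanov $p$-bounded on $\mathcal B$ if $\sup_{\mathbf t\in\Lambda,x\in B}\|F(\mathbf t+\cdot;x)\|_{L^p(\Omega:Y)}<\infty$ for each $B\in\mathcal B$. *)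

theory Defs
  imports "HOL-Analysis.Analysis"
begin

definition unit_cube :: "(real^'n) set" where
  "unit_cube = cbox 0 One"

definition scaled_cube :: "real \<Rightarrow> (real^'n) set" where
  "scaled_cube l = (\<lambda>u. l *\<^sub>R u) ` unit_cube"

definition Lp_on :: "real \<Rightarrow> (real^'n) set \<Rightarrow> (real^'n \<Rightarrow> real) \<Rightarrow> bool" where
  "Lp_on p S g \<longleftrightarrow> g \<in> borel_measurable (lebesgue_on S)
      \<and> integrable (lebesgue_on S) (\<lambda>u. \<bar>g u\<bar> powr p)"

definition Lp_norm :: "real \<Rightarrow> (real^'n) set \<Rightarrow> (real^'n \<Rightarrow> 'y::real_normed_vector) \<Rightarrow> real" where
  "Lp_norm p S f = (LINT u|lebesgue_on S. norm (f u) powr p) powr (1 / p)"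

definition cond_L :: "real \<Rightarrow> (real^'n) set \<Rightarrow> (real^'n \<Rightarrow> 'x \<Rightarrow> 'y::real_normed_vector) \<Rightarrow> bool" where
  "cond_L p \<Lambda> F \<longleftrightarrow> (\<forall>t\<in>\<Lambda>. \<forall>x. \<forall>l>0.
      Lp_on p (scaled_cube l) (\<lambda>u. norm (F (t + u) x)))"

definition D_weyl :: "real \<Rightarrow> (real^'n) set \<Rightarrow> (real^'n \<Rightarrow> 'x \<Rightarrow> 'y::real_normed_vector)
      \<Rightarrow> 'x set \<Rightarrow> real \<Rightarrow> ennreal" where
  "D_weyl p \<Lambda> F B l = (SUP x\<in>B. SUP t\<in>\<Lambda>.
      ennreal (l powr (- real CARD('n) / p) * Lp_norm p (scaled_cube l) (\<lambda>u. F (t + u) x)))"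

definition weyl_norm :: "real \<Rightarrow> (real^'n) set \<Rightarrow> (real^'n \<Rightarrow> 'x \<Rightarrow> 'y::real_normed_vector)
      \<Rightarrow> 'x set \<Rightarrow> ennreal" where
  "weyl_norm p \<Lambda> F B = Lim at_top (D_weyl p \<Lambda> F B)"

definition weyl_bounded :: "real \<Rightarrow> (real^'n) set \<Rightarrow> (real^'n \<Rightarrow> 'x \<Rightarrow> 'y::real_normed_vector)
      \<Rightarrow> 'x set set \<Rightarrow> bool" where
  "weyl_bounded p \<Lambda> F \<B> \<longleftrightarrow> (\<forall>B\<in>\<B>. weyl_norm p \<Lambda> F B < \<infinity>)"

definition stepanov_bounded :: "real \<Rightarrow> (real^'n) set \<Rightarrow> (real^'n \<Rightarrow> 'x \<Rightarrow> 'y::real_normed_vector)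
      \<Rightarrow> 'x set set \<Rightarrow> bool" where
  "stepanov_bounded p \<Lambda> F \<B> \<longleftrightarrow> (\<forall>B\<in>\<B>.
      (SUP t\<in>\<Lambda>. SUP x\<in>B. ennreal (Lp_norm p unit_cube (\<lambda>u. F (t + u) x))) < \<infinity>)"

end

theory Submission
  imports Defs
begin

text \<open>Write \<open>D(l)\<close> for \<open>D_weyl p \<Lambda> F B l\<close>. Covering the cube \<open>L\<Omega>\<close> by the \<open>k\<^sup>n\<close> grid
  translates \<open>c + l\<Omega>\<close> with \<open>k = \<lceil>L / l\<rceil>\<close>, and using that \<open>t + c \<in> \<Lambda>\<close> for each of them, gives
  \<open>D(L) \<le> (1 + l / L) powr (n / p) * D(l)\<close>. Hence \<open>D(L)\<close> tends to \<open>inf\<^sub>l D(l)\<close> as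
  \<open>L \<rightarrow> \<infinity>\<close>, and this infimum is finite iff \<open>D(1)\<close>, the Stepanov norm, is finite.\<close>

lemma scaled_cube_eq_cbox:
  assumes "0 < l"
  shows "scaled_cube l = (cbox 0 (l *\<^sub>R One) :: (real^'n) set)"
  using assms unfolding scaled_cube_def unit_cube_def
  by (subst image_smult_cbox) (auto simp: mem_box)

lemma scaled_cube_1: "scaled_cube 1 = unit_cube"
  unfolding scaled_cube_def by simp

lemma sum_Basis_cart_nth [simp]: "(\<Sum>b\<in>(Basis :: (real^'n) set). b $ i) = 1"
  using one_index[where 'a=real and 'n='n, of i] unfolding Cart_1 by simp

lemma integral_le_sum_of_cover:
  fixes g :: "'a::euclidean_space \<Rightarrow> real"
  assumes "finite I" and "S \<subseteq> (\<Union>i\<in>I. A i)" and "\<And>u. 0 \<le> g u"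
    and "g integrable_on S" and "\<And>i. i \<in> I \<Longrightarrow> g integrable_on A i"
  shows "integral S g \<le> (\<Sum>i\<in>I. integral (A i) g)"
proof -
  have "integral S g = integral UNIV (\<lambda>u. if u \<in> S then g u else 0)"
    by (simp add: integral_restrict_UNIV)
  also have "\<dots> \<le> integral UNIV (\<lambda>u. \<Sum>i\<in>I. if u \<in> A i then g u else 0)"
  proof (rule integral_le)
    show "(\<lambda>u. if u \<in> S then g u else 0) integrable_on UNIV"
      using assms(4) by (simp add: integrable_restrict_UNIV)
    show "(\<lambda>u. \<Sum>i\<in>I. if u \<in> A i then g u else 0) integrable_on UNIV"
      using assms(1,5) by (intro integrable_sum) (auto simp: integrable_restrict_UNIV)
    show "(if u \<in> S then g u else 0) \<le> (\<Sum>i\<in>I. if u \<in> A i then g u else 0)" for u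
    proof (cases "u \<in> S")
      case True
      then obtain i where "i \<in> I" "u \<in> A i" using assms(2) by blast
      then show ?thesis
        using True assms(1,3) member_le_sum[of i I "\<lambda>i. if u \<in> A i then g u else 0"] by simp
    qed (simp add: assms(3) sum_nonneg)
  qed
  also have "\<dots> = (\<Sum>i\<in>I. integral (A i) g)"
    using assms(1,5) by (subst integral_sum) (auto simp: integrable_restrict_UNIV integral_restrict_UNIV)
  finally show ?thesis .
qed

lemma grid_cell_exists:
  fixes x l :: real
  assumes "0 < l" and "0 \<le> x" and "x \<le> real k * l" and "1 \<le> k"
  shows "\<exists>j<k. real j * l \<le> x \<and> x \<le> real j * l + l"
proof -
  define j where "j = min (k - 1) (nat \<lfloor>x / l\<rfloor>)"
  have "j < k" using assms(4) by (simp add: j_def)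
  moreover have "real j * l \<le> x \<and> x \<le> real j * l + l"
  proof (cases "nat \<lfloor>x / l\<rfloor> < k")
    case True
    moreover have "0 \<le> x / l" using assms(1,2) by simp
    ultimately have "real j = \<lfloor>x / l\<rfloor>" by (simp add: j_def)
    moreover have "\<lfloor>x / l\<rfloor> * l \<le> x"
      using assms(1) by (meson of_int_floor_le pos_le_divide_eq)
    moreover have "x \<le> \<lfloor>x / l\<rfloor> * l + l"
      using assms(1) real_of_int_floor_add_one_ge[of "x / l"]
      by (simp add: pos_divide_le_eq algebra_simps)
    ultimately show ?thesis by simp
  next
    case False
    have "0 \<le> x / l" using assms(1,2) by simp
    then have "real k \<le> x / l"
      using False by (simp add: not_less le_nat_iff le_floor_iff)
    then have "x = real k * l" using assms(1,3) by (simp add: pos_le_divide_eq)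
    moreover have "real k = real j + 1" using False assms(4) by (simp add: j_def of_nat_diff)
    ultimately show ?thesis using assms(1) by (simp add: algebra_simps)
  qed
  ultimately show ?thesis by blast
qed

lemma cube_subset_grid_cells:
  assumes "0 < l" and "1 \<le> k"
  shows "cbox 0 ((real k * l) *\<^sub>R One) \<subseteq>
    (\<Union>f\<in>PiE UNIV (\<lambda>_::'n::finite. {..<k}). cbox (l *\<^sub>R (\<chi> i. real (f i))) (l *\<^sub>R One + l *\<^sub>R (\<chi> i. real (f i))))"
proof
  fix u :: "real^'n"
  assume "u \<in> cbox 0 ((real k * l) *\<^sub>R One)"
  then have "\<forall>i. \<exists>j<k. real j * l \<le> u $ i \<and> u $ i \<le> real j * l + l"
    using grid_cell_exists[OF assms(1) _ _ assms(2)] by (auto simp: mem_box_cart)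
  then obtain f where f: "\<And>i. f i < k \<and> real (f i) * l \<le> u $ i \<and> u $ i \<le> real (f i) * l + l"
    by metis
  then have "f \<in> PiE UNIV (\<lambda>_. {..<k})" by auto
  moreover have "u \<in> cbox (l *\<^sub>R (\<chi> i. real (f i))) (l *\<^sub>R One + l *\<^sub>R (\<chi> i. real (f i)))"
    using f by (auto simp: mem_box_cart algebra_simps)
  ultimately show "u \<in> (\<Union>f\<in>PiE UNIV (\<lambda>_. {..<k}). cbox (l *\<^sub>R (\<chi> i. real (f i))) (l *\<^sub>R One + l *\<^sub>R (\<chi> i. real (f i))))"
    by blast
qed

lemma grid_point_in_scaled_cube:
  assumes "0 < l" and "f \<in> PiE UNIV (\<lambda>_::'n::finite. {..<k})"
  shows "l *\<^sub>R (\<chi> i. real (f i)) \<in> scaled_cube (real k * l)"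
proof -
  have "real (f i) \<le> real k" for i using assms(2) by (auto simp: PiE_iff less_imp_le)
  then have "\<forall>i. 0 \<le> l * real (f i) \<and> l * real (f i) \<le> real k * l"
    using assms(1) by (simp add: mult.commute)
  moreover have "0 < real k * l" using assms by (cases "k = 0") (auto simp: PiE_iff)
  ultimately show ?thesis by (simp add: scaled_cube_eq_cbox mem_box_cart)
qed

lemma cond_L_cube_integral:
  assumes "cond_L p \<Lambda> F" and "t \<in> \<Lambda>" and "0 < l"
  shows "(\<lambda>u. norm (F (t + u) x) powr p) integrable_on cbox 0 (l *\<^sub>R One)"
    and "Lp_norm p (scaled_cube l) (\<lambda>u. F (t + u) x) =
           integral (cbox 0 (l *\<^sub>R One)) (\<lambda>u. norm (F (t + u) x) powr p) powr (1 / p)"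
proof -
  have "integrable (lebesgue_on (cbox 0 (l *\<^sub>R One))) (\<lambda>u. norm (F (t + u) x) powr p)"
    using assms unfolding cond_L_def Lp_on_def by (simp add: scaled_cube_eq_cbox)
  then show "(\<lambda>u. norm (F (t + u) x) powr p) integrable_on cbox 0 (l *\<^sub>R One)"
    and "Lp_norm p (scaled_cube l) (\<lambda>u. F (t + u) x) =
           integral (cbox 0 (l *\<^sub>R One)) (\<lambda>u. norm (F (t + u) x) powr p) powr (1 / p)"
    unfolding Lp_norm_def scaled_cube_eq_cbox[OF assms(3)]
    by (simp_all add: integrable_on_lebesgue_on lebesgue_integral_eq_integral)
qed

lemma Lp_norm_nonneg: "0 \<le> Lp_norm p S f"
  by (simp add: Lp_norm_def)

lemma cond_L_cube_integral_le:
  assumes "0 < p" and "cond_L p \<Lambda> F" and "s \<in> \<Lambda>" and "0 < l"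
    and "Lp_norm p (scaled_cube l) (\<lambda>u. F (s + u) x) \<le> m"
  shows "integral (cbox 0 (l *\<^sub>R One)) (\<lambda>u. norm (F (s + u) x) powr p) \<le> m powr p"
proof -
  let ?I = "integral (cbox 0 (l *\<^sub>R One)) (\<lambda>u. norm (F (s + u) x) powr p)"
  have "?I powr (1 / p) \<le> m"
    using assms(5) cond_L_cube_integral(2)[OF assms(2-4)] by simp
  then have "(?I powr (1 / p)) powr p \<le> m powr p"
    using assms(1) by (intro powr_mono2) auto
  moreover have "0 \<le> ?I"
    by (intro integral_nonneg cond_L_cube_integral(1)[OF assms(2-4)]) auto
  ultimately show ?thesis using assms(1) by (simp add: powr_powr)
qed

lemma Lp_norm_scaled_cube_le:
  fixes F :: "real^'n \<Rightarrow> 'x \<Rightarrow> 'y::real_normed_vector"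
  assumes p: "0 < p" and \<Lambda>: "\<forall>l>0. \<forall>t\<in>\<Lambda>. \<forall>u\<in>scaled_cube l. t + u \<in> \<Lambda>"
    and cL: "cond_L p \<Lambda> F" and t: "t \<in> \<Lambda>"
    and l: "0 < l" and L: "0 < L" and k: "1 \<le> k" "L \<le> real k * l"
    and bound: "\<And>s. s \<in> \<Lambda> \<Longrightarrow> Lp_norm p (scaled_cube l) (\<lambda>u. F (s + u) x) \<le> m"
  shows "Lp_norm p (scaled_cube L) (\<lambda>u. F (t + u) x) \<le> real k powr (CARD('n) / p) * m"
proof -
  define g where "g = (\<lambda>u. norm (F (t + u) x) powr p)"
  define c where "c f = l *\<^sub>R (\<chi> i. real (f i))" for f :: "'n \<Rightarrow> nat"
  let ?P = "PiE UNIV (\<lambda>_::'n. {..<k})"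
  have m: "0 \<le> m" using bound[OF t] Lp_norm_nonneg order_trans by blast
  have cell: "(g has_integral integral (cbox 0 (l *\<^sub>R One)) (g \<circ> (+) (c f)))
      (cbox (c f) (l *\<^sub>R One + c f))
    \<and> integral (cbox 0 (l *\<^sub>R One)) (g \<circ> (+) (c f)) \<le> m powr p" if f: "f \<in> ?P" for f
  proof -
    define s where "s = t + c f"
    have s: "s \<in> \<Lambda>"
    proof -
      have "0 < real k * l" using l k(1) by simp
      then show ?thesis using \<Lambda> t grid_point_in_scaled_cube[OF l f] unfolding s_def c_def by blast
    qed
    have h: "g \<circ> (+) (c f) = (\<lambda>v. norm (F (s + v) x) powr p)"
      by (simp add: g_def s_def o_def add.assoc)
    have "(g \<circ> (+) (c f)) integrable_on cbox 0 (l *\<^sub>R One)"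
      unfolding h by (rule cond_L_cube_integral(1)[OF cL s l])
    then have "(g has_integral integral (cbox 0 (l *\<^sub>R One)) (g \<circ> (+) (c f)))
        (cbox (0 + c f) (l *\<^sub>R One + c f))"
      by (intro has_integral_shift_cbox_iff[THEN iffD1] integrable_integral)
    moreover have "integral (cbox 0 (l *\<^sub>R One)) (g \<circ> (+) (c f)) \<le> m powr p"
      unfolding h by (rule cond_L_cube_integral_le[OF p cL s l bound[OF s]])
    ultimately show ?thesis by simp
  qed
  have gL: "g integrable_on cbox 0 (L *\<^sub>R One)"
    unfolding g_def by (rule cond_L_cube_integral(1)[OF cL t L])
  have "integral (cbox 0 (L *\<^sub>R One)) g \<le> (\<Sum>f\<in>?P. integral (cbox (c f) (l *\<^sub>R One + c f)) g)"
  proof (rule integral_le_sum_of_cover)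
    have "cbox 0 (L *\<^sub>R One) \<subseteq> cbox 0 ((real k * l) *\<^sub>R One :: real^'n)"
      using k(2) by (auto simp: mem_box_cart) (meson order_trans)
    then show "cbox 0 (L *\<^sub>R One) \<subseteq> (\<Union>f\<in>?P. cbox (c f) (l *\<^sub>R One + c f))"
      using cube_subset_grid_cells[OF l k(1)] unfolding c_def by blast
  qed (use gL cell in \<open>auto simp: g_def finite_PiE\<close>)
  also have "\<dots> \<le> (\<Sum>f\<in>?P. m powr p)"
    using cell by (intro sum_mono) (metis integral_unique)
  also have "\<dots> = real k ^ CARD('n) * m powr p"
    by (simp add: card_PiE)
  finally have "integral (cbox 0 (L *\<^sub>R One)) g powr (1 / p) \<le> (real k ^ CARD('n) * m powr p) powr (1 / p)"
    using p gL by (intro powr_mono2 integral_nonneg) (auto simp: g_def)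
  also have "\<dots> = real k powr (CARD('n) / p) * m"
  proof -
    have "(real k ^ CARD('n)) powr (1 / p) = real k powr (CARD('n) / p)"
      using k(1) by (simp add: powr_realpow[symmetric] powr_powr)
    then show ?thesis using p m by (simp add: powr_mult powr_powr)
  qed
  finally show ?thesis
    using cond_L_cube_integral(2)[OF cL t L] by (simp add: g_def)
qed

lemma D_weyl_le_ennreal_iff:
  fixes F :: "real^'n \<Rightarrow> 'x \<Rightarrow> 'y::real_normed_vector"
  assumes "0 \<le> d"
  shows "D_weyl p \<Lambda> F B l \<le> ennreal d \<longleftrightarrow>
    (\<forall>x\<in>B. \<forall>t\<in>\<Lambda>. l powr (- real CARD('n) / p) * Lp_norm p (scaled_cube l) (\<lambda>u. F (t + u) x) \<le> d)"
  unfolding D_weyl_def using assms by (simp add: SUP_le_iff ennreal_le_iff)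

lemma D_weyl_le:
  fixes F :: "real^'n \<Rightarrow> 'x \<Rightarrow> 'y::real_normed_vector"
  assumes p: "0 < p" and \<Lambda>: "\<forall>l>0. \<forall>t\<in>\<Lambda>. \<forall>u\<in>scaled_cube l. t + u \<in> \<Lambda>"
    and cL: "cond_L p \<Lambda> F" and l: "0 < l" and L: "0 < L"
  shows "D_weyl p \<Lambda> F B L \<le> ennreal ((1 + l / L) powr (CARD('n) / p)) * D_weyl p \<Lambda> F B l"
proof (cases "D_weyl p \<Lambda> F B l")
  case top
  have "0 < 1 + l / L" using l L by (simp add: add_pos_pos)
  with top show ?thesis by (simp add: ennreal_mult_top)
next
  case (real d)
  define N where "N = real CARD('n)"
  define k where "k = nat \<lceil>L / l\<rceil>"
  have "0 < L / l" using l L by simp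
  then have "1 \<le> k" and "L / l \<le> real k" and "real k \<le> L / l + 1"
    unfolding k_def by linarith+
  then have k: "1 \<le> k" "L \<le> real k * l" "real k * l \<le> L + l"
    using l by (simp_all add: field_simps)
  have bound: "Lp_norm p (scaled_cube l) (\<lambda>u. F (s + u) x) \<le> l powr (N / p) * d"
    if "x \<in> B" "s \<in> \<Lambda>" for x s
  proof -
    have "Lp_norm p (scaled_cube l) (\<lambda>u. F (s + u) x)
        = l powr (N / p) * (l powr (- N / p) * Lp_norm p (scaled_cube l) (\<lambda>u. F (s + u) x))"
      using l by (simp add: powr_minus_divide)
    also have "\<dots> \<le> l powr (N / p) * d"
      using real that D_weyl_le_ennreal_iff[of d p \<Lambda> F B l]
      by (intro mult_left_mono) (simp_all add: N_def)
    finally show ?thesis .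
  qed
  have "L powr (- N / p) * Lp_norm p (scaled_cube L) (\<lambda>u. F (t + u) x)
      \<le> (1 + l / L) powr (N / p) * d" if "x \<in> B" "t \<in> \<Lambda>" for x t
  proof -
    have "L powr (- N / p) * Lp_norm p (scaled_cube L) (\<lambda>u. F (t + u) x)
        \<le> L powr (- N / p) * (real k powr (N / p) * (l powr (N / p) * d))"
      using Lp_norm_scaled_cube_le[OF p \<Lambda> cL that(2) l L k(1,2) bound[OF that(1)]]
      by (intro mult_left_mono) (simp_all add: N_def)
    also have "\<dots> = (real k * l / L) powr (N / p) * d"
      using l L k(1) by (simp add: powr_mult powr_divide powr_minus_divide)
    also have "\<dots> \<le> (1 + l / L) powr (N / p) * d"
      using real l L k(3) p by (intro mult_right_mono powr_mono2) (auto simp: N_def field_simps)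
    finally show ?thesis .
  qed
  then show ?thesis
    using real l L D_weyl_le_ennreal_iff[of "(1 + l / L) powr (N / p) * d" p \<Lambda> F B L]
    by (simp add: N_def ennreal_mult)
qed

lemma tendsto_INF_if_quasi_antimono:
  fixes f :: "real \<Rightarrow> ennreal"
  assumes "\<And>l L. 0 < l \<Longrightarrow> 0 < L \<Longrightarrow> f L \<le> ennreal ((1 + l / L) powr a) * f l"
  shows "(f \<longlongrightarrow> (INF l\<in>{0<..}. f l)) at_top"
proof (rule order_tendstoI)
  fix c assume "c < (INF l\<in>{0<..}. f l)"
  moreover have "\<forall>\<^sub>F L in at_top. (INF l\<in>{0<..}. f l) \<le> f L"
    using eventually_gt_at_top[of 0] by eventually_elim (simp add: INF_lower)
  ultimately show "\<forall>\<^sub>F L in at_top. c < f L"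
    by (auto elim: eventually_mono intro: order_less_le_trans)
next
  fix c assume "(INF l\<in>{0<..}. f l) < c"
  then obtain l where l: "0 < l" and "f l < c" by (auto simp: INF_less_iff)
  then obtain d where d: "f l = ennreal d" "0 \<le> d" "ennreal d < c"
    by (cases "f l") auto
  have "((\<lambda>L. (1 + l / L) powr a * d) \<longlongrightarrow> (1 + 0) powr a * d) at_top"
    by (intro tendsto_intros tendsto_divide_0[OF tendsto_const]
        filterlim_at_top_imp_at_infinity filterlim_ident) simp
  then have "((\<lambda>L. ennreal ((1 + l / L) powr a * d)) \<longlongrightarrow> ennreal d) at_top"
    by (intro tendsto_ennrealI) simp
  then have "\<forall>\<^sub>F L in at_top. ennreal ((1 + l / L) powr a * d) < c"
    using d(3) by (rule order_tendstoD)
  then show "\<forall>\<^sub>F L in at_top. f L < c"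
    using eventually_gt_at_top[of 0]
  proof eventually_elim
    case (elim L)
    then show ?case
      using assms[OF l, of L] d by (simp add: ennreal_mult order_le_less_trans)
  qed
qed

lemma weyl_norm_eq_INF_D_weyl:
  fixes F :: "real^'n \<Rightarrow> 'x \<Rightarrow> 'y::real_normed_vector"
  assumes "0 < p" and "\<forall>l>0. \<forall>t\<in>\<Lambda>. \<forall>u\<in>scaled_cube l. t + u \<in> \<Lambda>" and "cond_L p \<Lambda> F"
  shows "weyl_norm p \<Lambda> F B = (INF l\<in>{0<..}. D_weyl p \<Lambda> F B l)"
proof -
  have "(D_weyl p \<Lambda> F B \<longlongrightarrow> (INF l\<in>{0<..}. D_weyl p \<Lambda> F B l)) at_top"
    by (rule tendsto_INF_if_quasi_antimono) (rule D_weyl_le[OF assms])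
  then show ?thesis
    unfolding weyl_norm_def by (rule tendsto_Lim[OF trivial_limit_at_top_linorder])
qed

lemma weyl_norm_less_top_iff:
  fixes F :: "real^'n \<Rightarrow> 'x \<Rightarrow> 'y::real_normed_vector"
  assumes p: "0 < p" and \<Lambda>: "\<forall>l>0. \<forall>t\<in>\<Lambda>. \<forall>u\<in>scaled_cube l. t + u \<in> \<Lambda>" and cL: "cond_L p \<Lambda> F"
  shows "weyl_norm p \<Lambda> F B < \<infinity> \<longleftrightarrow> D_weyl p \<Lambda> F B 1 < \<infinity>"
  unfolding weyl_norm_eq_INF_D_weyl[OF assms]
proof
  assume "(INF l\<in>{0<..}. D_weyl p \<Lambda> F B l) < \<infinity>"
  then obtain l where l: "0 < l" and "D_weyl p \<Lambda> F B l < \<infinity>"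
    by (auto simp: INF_less_iff)
  then have "ennreal ((1 + l / 1) powr (CARD('n) / p)) * D_weyl p \<Lambda> F B l < \<infinity>"
    by (simp add: ennreal_mult_less_top)
  then show "D_weyl p \<Lambda> F B 1 < \<infinity>"
    by (rule order.strict_trans1[OF D_weyl_le[OF p \<Lambda> cL l zero_less_one]])
next
  assume "D_weyl p \<Lambda> F B 1 < \<infinity>"
  moreover have "(INF l\<in>{0<..}. D_weyl p \<Lambda> F B l) \<le> D_weyl p \<Lambda> F B 1"
    by (rule INF_lower) simp
  ultimately show "(INF l\<in>{0<..}. D_weyl p \<Lambda> F B l) < \<infinity>"
    by simp
qed

lemma D_weyl_1_eq_stepanov:
  "D_weyl p \<Lambda> F B 1 = (SUP t\<in>\<Lambda>. SUP x\<in>B. ennreal (Lp_norm p unit_cube (\<lambda>u. F (t + u) x)))"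
  unfolding D_weyl_def scaled_cube_1 by (simp add: SUP_commute[of _ \<Lambda> B])

theorem proposition3p3:
  fixes p :: real
    and \<B> :: "'x::banach set set"
    and \<Lambda> :: "(real^'n) set"
    and F :: "real^'n \<Rightarrow> 'x \<Rightarrow> 'y::banach"
  assumes "1 \<le> p"
    and "\<B> \<noteq> {}" and "\<Union>\<B> = UNIV"
    and "\<Lambda> \<noteq> {}"
    and "\<forall>l>0. \<forall>t\<in>\<Lambda>. \<forall>u\<in>scaled_cube l. t + u \<in> \<Lambda>"
    and "cond_L p \<Lambda> F"
  shows "weyl_bounded p \<Lambda> F \<B> \<longleftrightarrow> stepanov_bounded p \<Lambda> F \<B>"
proof -
  \<comment> \<open>The equivalence holds for each \<open>B\<close> separately.\<close>
  have "0 < p" using assms(1) by simp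
  then have "weyl_norm p \<Lambda> F B < \<infinity> \<longleftrightarrow>
      (SUP t\<in>\<Lambda>. SUP x\<in>B. ennreal (Lp_norm p unit_cube (\<lambda>u. F (t + u) x))) < \<infinity>" for B
    using weyl_norm_less_top_iff[OF _ assms(5,6)] by (simp add: D_weyl_1_eq_stepanov)
  then show ?thesis
    unfolding weyl_bounded_def stepanov_bounded_def by simp
qed

end
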